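(* Let $n,m,k$ be integers with $n\geq m\geq 1$, $k\geq 3$ and $n\leq 6m+6$. Then $$ gr_{k}(K_{3} : S(n, m))\leq \begin{cases} 2n+m(k+3)+8 & \text{ if $n$ is even,}\\ 2n+m(k+3)+9 & \text{ if $n$ is odd.} \end{cases} $$
   Context: For integers $n\geq m\geq 0$, the double star $S(n,m)$ is the graph obtained from the disjoint union of the stars $K_{1,n}$ and $K_{1,m}$ by adding an edge between their centers. A $k$-coloring of a graph is an assignment of one of $k$ colors to each edge. A subgraph is rainbow if all its edges have distinct colors and monochromatic if all its edges have the same color. For graphs $G,H$ and a positive integer $k$, the Gallai–Ramsey number $gr_k(G:H)$ is the minimum integer $N$ such that every $k$-coloring of the edges of the complete graph $K_N$ contains either a rainbow copy of $G$ or a monochromatic copy of $H$. *)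

theory Defs
  imports Main
begin

definition kcoloring :: "nat \<Rightarrow> nat \<Rightarrow> (nat \<Rightarrow> nat \<Rightarrow> nat) \<Rightarrow> bool" where
  "kcoloring k N c \<longleftrightarrow>
     (\<forall>i<N. \<forall>j<N. i \<noteq> j \<longrightarrow> c i j = c j i \<and> c i j < k)"

definition has_rainbow_K3 :: "nat \<Rightarrow> (nat \<Rightarrow> nat \<Rightarrow> nat) \<Rightarrow> bool" where
  "has_rainbow_K3 N c \<longleftrightarrow>
     (\<exists>x<N. \<exists>y<N. \<exists>z<N. x \<noteq> y \<and> y \<noteq> z \<and> x \<noteq> z \<and>
        c x y \<noteq> c y z \<and> c y z \<noteq> c x z \<and> c x y \<noteq> c x z)"

definition has_mono_double_star :: "nat \<Rightarrow> nat \<Rightarrow> nat \<Rightarrow> (nat \<Rightarrow> nat \<Rightarrow> nat) \<Rightarrow> bool" where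
  "has_mono_double_star n m N c \<longleftrightarrow>
     (\<exists>u v A B col. u < N \<and> v < N \<and> u \<noteq> v \<and>
        A \<subseteq> {0..<N} \<and> B \<subseteq> {0..<N} \<and> card A = n \<and> card B = m \<and>
        A \<inter> B = {} \<and> u \<notin> A \<union> B \<and> v \<notin> A \<union> B \<and>
        c u v = col \<and> (\<forall>a\<in>A. c u a = col) \<and> (\<forall>b\<in>B. c v b = col))"

definition gr_K3_double_star :: "nat \<Rightarrow> nat \<Rightarrow> nat \<Rightarrow> nat" where
  "gr_K3_double_star k n m =
     (LEAST N. \<forall>c. kcoloring k N c \<longrightarrow> has_rainbow_K3 N c \<or> has_mono_double_star n m N c)"

end

theory Submission
  imports Defs "HOL-Library.Disjoint_Sets"
begin

text \<open>A coloring of K_N without rainbow triangles is a Gallai coloring, so by Gallai's theorem its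
  vertex set splits into at least two modules (sets that every outside vertex sees in a single
  color) with only two colors between different parts. Assume there is no monochromatic S(n,m).
  If some proper module W has more than n vertices, then for each color at most m outside vertices
  see W in that color, and when W is larger still, these colors have degree below m inside W;
  recursing into W while charging m vertices to every color used gives
  |V| \<le> (k - |R|) m + 2n + 3m + 3, where R is the set of colors already charged.
  If instead all parts have at most n vertices, counting degrees in the two cross colors shows
  that every part has at least |V| - 2n vertices and that no vertex sees two other parts in the
  same color, which is impossible when |V| \<ge> 2n + 3m + 4 and n \<le> 6m + 6.
  This gives gr_k(K_3 : S(n,m)) \<le> 2n + (k + 3) m + 4, slightly better than the stated bound.\<close>

section \<open>Gallai colorings and their color classes\<close>

lemma two_le_cardE:
  assumes "2 \<le> card A"
  obtains x y where "x \<in> A" "y \<in> A" "x \<noteq> y"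
proof -
  obtain S where "S \<subseteq> A" "card S = 2" using obtain_subset_with_card_n assms by metis
  then show thesis using that by (auto simp: card_2_iff)
qed

definition gallai_coloring :: "'a set \<Rightarrow> ('a \<Rightarrow> 'a \<Rightarrow> nat) \<Rightarrow> bool" where
  "gallai_coloring V c \<longleftrightarrow> (\<forall>x\<in>V. \<forall>y\<in>V. x \<noteq> y \<longrightarrow> c x y = c y x) \<and>
     (\<forall>x\<in>V. \<forall>y\<in>V. \<forall>z\<in>V. x \<noteq> y \<longrightarrow> y \<noteq> z \<longrightarrow> x \<noteq> z \<longrightarrow>
        c x y = c y z \<or> c y z = c x z \<or> c x y = c x z)"

definition is_module :: "'a set \<Rightarrow> ('a \<Rightarrow> 'a \<Rightarrow> nat) \<Rightarrow> 'a set \<Rightarrow> bool" where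
  "is_module V c W \<longleftrightarrow> W \<subseteq> V \<and> (\<forall>z\<in>V - W. \<forall>x\<in>W. \<forall>y\<in>W. c z x = c z y)"

definition color_edge :: "nat \<Rightarrow> 'a set \<Rightarrow> ('a \<Rightarrow> 'a \<Rightarrow> nat) \<Rightarrow> 'a \<Rightarrow> 'a \<Rightarrow> bool" where
  "color_edge i V c x y \<longleftrightarrow> x \<in> V \<and> y \<in> V \<and> x \<noteq> y \<and> c x y = i"

abbreviation color_reach :: "nat \<Rightarrow> 'a set \<Rightarrow> ('a \<Rightarrow> 'a \<Rightarrow> nat) \<Rightarrow> 'a \<Rightarrow> 'a \<Rightarrow> bool" where
  "color_reach i V c \<equiv> (color_edge i V c)\<^sup>*\<^sup>*"

definition color_connected :: "nat \<Rightarrow> 'a set \<Rightarrow> ('a \<Rightarrow> 'a \<Rightarrow> nat) \<Rightarrow> bool" where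
  "color_connected i V c \<longleftrightarrow>
     (\<exists>x y. color_edge i V c x y) \<and> (\<forall>x\<in>V. \<forall>y\<in>V. color_reach i V c x y)"

lemma gallai_coloring_sym:
  "gallai_coloring V c \<Longrightarrow> x \<in> V \<Longrightarrow> y \<in> V \<Longrightarrow> x \<noteq> y \<Longrightarrow> c x y = c y x"
  unfolding gallai_coloring_def by blast

lemma gallai_coloring_triangle:
  "gallai_coloring V c \<Longrightarrow> x \<in> V \<Longrightarrow> y \<in> V \<Longrightarrow> z \<in> V \<Longrightarrow> x \<noteq> y \<Longrightarrow> y \<noteq> z \<Longrightarrow> x \<noteq> z
   \<Longrightarrow> c x y = c y z \<or> c y z = c x z \<or> c x y = c x z"
  unfolding gallai_coloring_def by blast

lemma gallai_coloring_subset: "gallai_coloring V c \<Longrightarrow> W \<subseteq> V \<Longrightarrow> gallai_coloring W c"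
  unfolding gallai_coloring_def by blast

lemma color_edge_sym: "gallai_coloring V c \<Longrightarrow> color_edge i V c x y \<Longrightarrow> color_edge i V c y x"
  unfolding color_edge_def by (metis gallai_coloring_sym)

lemma color_reach_sym:
  assumes "gallai_coloring V c" "color_reach i V c x y"
  shows "color_reach i V c y x"
  using assms(2) by (induction rule: rtranclp_induct)
    (auto intro: converse_rtranclp_into_rtranclp color_edge_sym[OF assms(1)])

lemma color_reach_in: "color_reach i V c x y \<Longrightarrow> x \<in> V \<Longrightarrow> y \<in> V"
  by (induction rule: rtranclp_induct) (auto simp: color_edge_def)

text \<open>Along an i-edge u u' of the component, neither u w nor u' w has color i, so the
  triangle u u' w forces c u w = c u' w.\<close>
lemma color_component_is_module:
  assumes g: "gallai_coloring V c" and reach: "color_reach i V c x u"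
    and w: "w \<in> V" "\<not> color_reach i V c x w"
  shows "c u w = c x w"
  using reach
proof (induction rule: rtranclp_induct)
  case (step u u')
  then have u: "u \<in> V" "u' \<in> V" "u \<noteq> u'" "c u u' = i" by (auto simp: color_edge_def)
  have reach_u': "color_reach i V c x u'" using step by auto
  have "u \<noteq> w" "u' \<noteq> w" using step.hyps(1) reach_u' w(2) by auto
  have "c u w \<noteq> i" "c u' w \<noteq> i"
    using step.hyps(1) reach_u' w \<open>u \<noteq> w\<close> \<open>u' \<noteq> w\<close> u
    by (auto simp: color_edge_def intro: rtranclp.rtrancl_into_rtrancl)
  then have "c u' w = c u w"
    using gallai_coloring_triangle[OF g u(1,2) w(1) u(3) \<open>u' \<noteq> w\<close> \<open>u \<noteq> w\<close>] u(4) by auto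
  then show ?case using step.IH by simp
qed simp

lemma color_connected_edge_at:
  assumes "color_connected i V c" "v \<in> V" "w \<in> V" "w \<noteq> v"
  shows "\<exists>z\<in>V - {v}. c v z = i"
proof -
  have "color_reach i V c v w" using assms by (auto simp: color_connected_def)
  then show ?thesis using assms(4) by (cases rule: converse_rtranclpE) (auto simp: color_edge_def)
qed

text \<open>An i-path from x to v enters v from an i-neighbour of v, and its part before that
  avoids v.\<close>
lemma color_reach_neighbour_of_removed:
  assumes conn: "color_connected i V c" and v: "v \<in> V" and x: "x \<in> V - {v}"
  shows "\<exists>u. color_reach i (V - {v}) c x u \<and> u \<in> V - {v} \<and> c u v = i"
proof (rule ccontr)
  assume none: "\<not> ?thesis"
  have "color_reach i (V - {v}) c x y" if "color_reach i V c x y" for y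
    using that
  proof (induction rule: rtranclp_induct)
    case (step y z)
    have y: "y \<in> V - {v}" using color_reach_in[OF step.IH] x by blast
    have "z \<in> V" "y \<noteq> z" "c y z = i" using step.hyps(2) by (simp_all add: color_edge_def)
    moreover have "z \<noteq> v"
    proof
      assume "z = v"
      then have "color_reach i (V - {v}) c x y \<and> y \<in> V - {v} \<and> c y v = i"
        using step.IH y \<open>c y z = i\<close> by simp
      then show False using none by blast
    qed
    ultimately have "color_edge i (V - {v}) c y z" using y by (simp add: color_edge_def)
    with step.IH show ?case by (rule rtranclp.rtrancl_into_rtrancl)
  qed simp
  moreover have "color_reach i V c x v" using conn v x by (auto simp: color_connected_def)
  ultimately have "color_reach i (V - {v}) c x v" by simp
  from color_reach_in[OF this] x show False by blast
qed

text \<open>The component of w in V - {v} contains an i-neighbour u of v, which z does not reach;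
  the triangle v z u then forces c z u = c v z.\<close>
lemma color_at_cut_vertex:
  assumes g: "gallai_coloring V c" and conn: "color_connected i V c" and v: "v \<in> V"
    and z: "z \<in> V - {v}" "c v z \<noteq> i"
    and w: "w \<in> V - {v}" "\<not> color_reach i (V - {v}) c z w"
  shows "c z w = c v z"
proof -
  have g': "gallai_coloring (V - {v}) c" using gallai_coloring_subset[OF g] by blast
  obtain u where u: "color_reach i (V - {v}) c w u" "u \<in> V - {v}" "c u v = i"
    using color_reach_neighbour_of_removed[OF conn v w(1)] by blast
  have "color_reach i (V - {v}) c u w" using color_reach_sym[OF g' u(1)] .
  then have not_zu: "\<not> color_reach i (V - {v}) c z u"
    using w(2) rtranclp_trans by fast
  then have "z \<noteq> u" by auto
  have "c z u \<noteq> i"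
  proof
    assume "c z u = i"
    then have "color_edge i (V - {v}) c z u" using z(1) u(2) \<open>z \<noteq> u\<close> by (simp add: color_edge_def)
    then show False using not_zu by (simp add: r_into_rtranclp)
  qed
  have "c v u = i" using gallai_coloring_sym[OF g v, of u] u(2,3) by auto
  then have zu: "c z u = c v z"
    using gallai_coloring_triangle[OF g v, of z u] z u(2) \<open>z \<noteq> u\<close> \<open>c z u \<noteq> i\<close> by auto
  have "\<not> color_reach i (V - {v}) c w z" using w(2) color_reach_sym[OF g'] by blast
  then have uz: "c u z = c w z" using color_component_is_module[OF g' u(1) z(1)] by simp
  have "z \<noteq> w" using w(2) by auto
  have "c z w = c w z" using gallai_coloring_sym[OF g'] z(1) w(1) \<open>z \<noteq> w\<close> by simp
  also have "\<dots> = c u z" using uz by simp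
  also have "\<dots> = c z u" using gallai_coloring_sym[OF g'] z(1) u(2) \<open>z \<noteq> u\<close> by simp
  finally show ?thesis using zu by simp
qed

text \<open>Two vertices z, z' joined to v in colors other than i are compared through a vertex w
  reached by neither of them in V - {v}: both c v z and c v z' equal the color towards w.\<close>
lemma cut_vertex_two_colors:
  assumes g: "gallai_coloring V c" and fin: "finite V" and card: "3 \<le> card V"
    and conn: "color_connected i V c" and disconn: "\<not> color_connected i (V - {v}) c"
    and v: "v \<in> V"
  shows "\<exists>\<gamma>. \<forall>z\<in>V - {v}. c v z \<in> {i, \<gamma>}"
proof -
  define V' where "V' = V - {v}"
  have g': "gallai_coloring V' c" using gallai_coloring_subset[OF g] unfolding V'_def by blast
  have "\<exists>x\<in>V'. \<exists>y\<in>V'. \<not> color_reach i V' c x y"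
  proof (cases "\<exists>x y. color_edge i V' c x y")
    case False
    have "2 \<le> card V'" using card fin v unfolding V'_def by simp
    then obtain x y where "x \<in> V'" "y \<in> V'" "x \<noteq> y" by (rule two_le_cardE)
    moreover have "\<not> color_reach i V' c x y"
      using False \<open>x \<noteq> y\<close> by (auto elim: converse_rtranclpE)
    ultimately show ?thesis by blast
  qed (use disconn in \<open>auto simp: color_connected_def V'_def\<close>)
  then have outside: "\<exists>w\<in>V'. \<not> color_reach i V' c z w" if "z \<in> V'" for z
    using that color_reach_sym[OF g'] by (meson rtranclp_trans)
  have same: "c v z = c v z'" if "z \<in> V'" "c v z \<noteq> i" "z' \<in> V'" "c v z' \<noteq> i" for z z'
  proof (cases "color_reach i V' c z z'")
    case True
    obtain w where w: "w \<in> V'" "\<not> color_reach i V' c z w" using outside \<open>z \<in> V'\<close> by blast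
    then have "\<not> color_reach i V' c z' w" using True by (meson rtranclp_trans)
    then have "c z' w = c z w" using color_component_is_module[OF g' True w(1)] w(2) by blast
    then show ?thesis using color_at_cut_vertex[OF g conn v] that w \<open>\<not> color_reach i V' c z' w\<close>
      unfolding V'_def by metis
  next
    case False
    then have "\<not> color_reach i V' c z' z" using color_reach_sym[OF g'] by blast
    then show ?thesis using color_at_cut_vertex[OF g conn v] that False gallai_coloring_sym[OF g']
      unfolding V'_def by (metis rtranclp.rtrancl_refl)
  qed
  show ?thesis
  proof (cases "\<exists>z\<in>V'. c v z \<noteq> i")
    case True
    then obtain z where "z \<in> V'" "c v z \<noteq> i" by blast
    then show ?thesis using same unfolding V'_def by blast
  qed (auto simp: V'_def)
qed

text \<open>Deleting a vertex x disconnects one of the three colors (induction), so by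
  cut_vertex_two_colors x sees the other vertices in at most two colors; but the remaining
  connected color must occur at x.\<close>
lemma no_three_connected_colors:
  assumes "finite V" "gallai_coloring V c" "a \<noteq> b" "b \<noteq> e" "a \<noteq> e"
    and "color_connected a V c" "color_connected b V c" "color_connected e V c"
  shows False
  using assms
proof (induction "card V" arbitrary: V rule: less_induct)
  case less
  note fin = less.prems(1) and g = less.prems(2) and distinct = less.prems(3-5)
    and conn = less.prems(6-8)
  obtain x y where xy: "color_edge a V c x y" using conn(1) by (auto simp: color_connected_def)
  obtain x' y' where xy': "color_edge b V c x' y'" using conn(2) by (auto simp: color_connected_def)
  have "3 \<le> card V"
  proof (rule ccontr)
    assume "\<not> 3 \<le> card V"
    then have "V = {x, y}" using card_seteq[OF fin, of "{x, y}"] xy by (auto simp: color_edge_def)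
    then show False using xy xy' gallai_coloring_sym[OF g] distinct by (auto simp: color_edge_def)
  qed
  have x: "x \<in> V" "y \<in> V" "y \<noteq> x" using xy by (auto simp: color_edge_def)
  have "\<not> (color_connected a (V - {x}) c \<and> color_connected b (V - {x}) c \<and>
      color_connected e (V - {x}) c)"
    using less.hyps[OF card_Diff1_less[OF fin x(1)] _ gallai_coloring_subset[OF g Diff_subset] distinct]
      fin by blast
  then obtain f where f: "f \<in> {a, b, e}" "\<not> color_connected f (V - {x}) c" by blast
  have "color_connected f V c" using f(1) conn by blast
  then obtain \<gamma> where \<gamma>: "\<forall>z\<in>V - {x}. c x z \<in> {f, \<gamma>}"
    using cut_vertex_two_colors[OF g fin \<open>3 \<le> card V\<close> _ f(2) x(1)] by blast
  have "{a, b, e} - {f, \<gamma>} \<noteq> {}" using f(1) distinct by auto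
  then obtain h where h: "h \<in> {a, b, e}" "h \<notin> {f, \<gamma>}" by blast
  have "color_connected h V c" using h(1) conn by blast
  then obtain z where "z \<in> V - {x}" "c x z = h" using color_connected_edge_at[OF _ x] by blast
  then show False using \<gamma> h by auto
qed

lemma disconnected_color_exists:
  assumes fin: "finite V" and g: "gallai_coloring V c"
    and three: "\<not> (\<exists>r b. \<forall>x\<in>V. \<forall>y\<in>V. x \<noteq> y \<longrightarrow> c x y \<in> {r, b})"
  obtains i x y where "color_edge i V c x y" "\<not> color_connected i V c"
proof -
  have "\<not> (\<forall>x\<in>V. \<forall>y\<in>V. x \<noteq> y \<longrightarrow> c x y \<in> {0, 0})" using three by blast
  then obtain x1 y1 where 1: "x1 \<in> V" "y1 \<in> V" "x1 \<noteq> y1" by blast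
  have "\<not> (\<forall>x\<in>V. \<forall>y\<in>V. x \<noteq> y \<longrightarrow> c x y \<in> {c x1 y1, c x1 y1})" using three by blast
  then obtain x2 y2 where 2: "x2 \<in> V" "y2 \<in> V" "x2 \<noteq> y2" "c x2 y2 \<noteq> c x1 y1" by blast
  have "\<not> (\<forall>x\<in>V. \<forall>y\<in>V. x \<noteq> y \<longrightarrow> c x y \<in> {c x1 y1, c x2 y2})" using three by blast
  then obtain x3 y3 where 3: "x3 \<in> V" "y3 \<in> V" "x3 \<noteq> y3" "c x3 y3 \<noteq> c x1 y1" "c x3 y3 \<noteq> c x2 y2"
    by blast
  have "\<not> (color_connected (c x1 y1) V c \<and> color_connected (c x2 y2) V c \<and>
      color_connected (c x3 y3) V c)"
    using no_three_connected_colors[OF fin g] 2(4) 3(4,5) by metis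
  then show thesis using that 1 2 3 by (auto simp: color_edge_def)
qed

section \<open>Gallai's partition theorem\<close>

definition gallai_partition :: "'a set \<Rightarrow> ('a \<Rightarrow> 'a \<Rightarrow> nat) \<Rightarrow> 'a set set \<Rightarrow> nat \<Rightarrow> nat \<Rightarrow> bool" where
  "gallai_partition V c P r b \<longleftrightarrow> partition_on V P \<and> 2 \<le> card P \<and> (\<forall>p\<in>P. is_module V c p) \<and>
     (\<forall>p\<in>P. \<forall>q\<in>P. p \<noteq> q \<longrightarrow> (\<forall>x\<in>p. \<forall>y\<in>q. c x y \<in> {r, b}))"

lemma gallai_partition_singletons:
  assumes "2 \<le> card V" and "\<forall>x\<in>V. \<forall>y\<in>V. x \<noteq> y \<longrightarrow> c x y \<in> {r, b}"
  shows "gallai_partition V c ((\<lambda>x. {x}) ` V) r b"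
proof -
  have "card ((\<lambda>x. {x}) ` V) = card V" by (rule card_image) (simp add: inj_on_def)
  then show ?thesis using assms partition_on_singletons[of V]
    by (auto simp: gallai_partition_def is_module_def)
qed

lemma partition_on_preimage:
  assumes part: "partition_on (f ` V) Q"
  shows "partition_on V ((\<lambda>q. V \<inter> f -` q) ` Q)" "card ((\<lambda>q. V \<inter> f -` q) ` Q) = card Q"
proof -
  define lift where "lift q = V \<inter> f -` q" for q
  have image_lift: "f ` lift q = q" if "q \<in> Q" for q
  proof -
    have "q \<subseteq> f ` V" using part that by (auto simp: partition_on_def)
    then show ?thesis unfolding lift_def by blast
  qed
  show "partition_on V (lift ` Q)"
  proof (rule partition_onI)
    show "\<Union> (lift ` Q) = V" using partition_onD1[OF part] by (auto simp: lift_def)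
    show "disjnt p p'" if "p \<in> lift ` Q" "p' \<in> lift ` Q" "p \<noteq> p'" for p p'
      using that partition_onD2[OF part] by (auto simp: lift_def disjnt_def disjoint_def)
    show "{} \<notin> lift ` Q"
    proof
      assume "{} \<in> lift ` Q"
      then obtain q where "q \<in> Q" "lift q = {}" by auto
      then have "q = {}" using image_lift by (metis image_empty)
      then show False using partition_onD3[OF part] \<open>q \<in> Q\<close> by simp
    qed
  qed
  have "inj_on lift Q" by (rule inj_onI) (metis image_lift)
  then show "card (lift ` Q) = card Q" by (rule card_image)
qed

lemma gallai_partition_preimage:
  assumes Q: "gallai_partition (f ` V) c Q r b"
    and f: "\<And>x y. x \<in> V \<Longrightarrow> y \<in> V \<Longrightarrow> f x \<noteq> f y \<Longrightarrow> c x y = c (f x) (f y)"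
  shows "gallai_partition V c ((\<lambda>q. V \<inter> f -` q) ` Q) r b"
proof -
  have part: "partition_on (f ` V) Q"
    and modules: "\<And>q. q \<in> Q \<Longrightarrow> is_module (f ` V) c q"
    and cross: "\<And>q q' x y. q \<in> Q \<Longrightarrow> q' \<in> Q \<Longrightarrow> q \<noteq> q' \<Longrightarrow> x \<in> q \<Longrightarrow> y \<in> q' \<Longrightarrow> c x y \<in> {r, b}"
    using Q by (auto simp: gallai_partition_def)
  have "is_module V c (V \<inter> f -` q)" if q: "q \<in> Q" for q
    unfolding is_module_def
  proof (intro conjI ballI)
    fix z x y assume "z \<in> V - (V \<inter> f -` q)" "x \<in> V \<inter> f -` q" "y \<in> V \<inter> f -` q"
    then have V: "z \<in> V" "x \<in> V" "y \<in> V" and "f z \<in> f ` V - q" "f x \<in> q" "f y \<in> q" by auto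
    then have "f z \<noteq> f x" "f z \<noteq> f y" by auto
    have "c (f z) (f x) = c (f z) (f y)"
      using modules[OF q] \<open>f z \<in> f ` V - q\<close> \<open>f x \<in> q\<close> \<open>f y \<in> q\<close> unfolding is_module_def by blast
    then show "c z x = c z y"
      using f[OF V(1,2) \<open>f z \<noteq> f x\<close>] f[OF V(1,3) \<open>f z \<noteq> f y\<close>] by simp
  qed simp
  moreover have "c x y \<in> {r, b}" if "q \<in> Q" "q' \<in> Q" "V \<inter> f -` q \<noteq> V \<inter> f -` q'"
    "x \<in> V \<inter> f -` q" "y \<in> V \<inter> f -` q'" for q q' x y
  proof -
    have q: "q \<noteq> q'" "x \<in> V" "y \<in> V" "f x \<in> q" "f y \<in> q'" using that by auto
    moreover have "q \<inter> q' = {}" using partition_onD2[OF part] that(1,2) q(1)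
      by (auto simp: disjoint_def)
    ultimately have "f x \<noteq> f y" by auto
    then show ?thesis using f[OF q(2,3)] cross[OF that(1,2) q(1,4,5)] by simp
  qed
  ultimately show ?thesis
    using Q partition_on_preimage[OF part] by (auto simp: gallai_partition_def)
qed

definition color_component_rep :: "nat \<Rightarrow> 'a set \<Rightarrow> ('a \<Rightarrow> 'a \<Rightarrow> nat) \<Rightarrow> 'a \<Rightarrow> 'a" where
  "color_component_rep i V c x = (SOME y. color_reach i V c x y)"

lemma color_reach_component_rep: "color_reach i V c x (color_component_rep i V c x)"
  unfolding color_component_rep_def by (rule someI[of _ x]) simp

lemma color_component_rep_in: "x \<in> V \<Longrightarrow> color_component_rep i V c x \<in> V"
  using color_reach_in[OF color_reach_component_rep] .

lemma color_component_rep_eq_iff: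
  assumes g: "gallai_coloring V c"
  shows "color_component_rep i V c x = color_component_rep i V c y \<longleftrightarrow> color_reach i V c x y"
proof
  assume "color_component_rep i V c x = color_component_rep i V c y"
  moreover have "color_reach i V c (color_component_rep i V c y) y"
    by (rule color_reach_sym[OF g color_reach_component_rep])
  ultimately show "color_reach i V c x y"
    using color_reach_component_rep[of i V c x]
      rtranclp_trans[of _ x "color_component_rep i V c x" y] by simp
next
  assume xy: "color_reach i V c x y"
  have "color_reach i V c x = color_reach i V c y"
  proof
    fix z
    show "color_reach i V c x z = color_reach i V c y z"
      using rtranclp_trans[OF xy, of z] rtranclp_trans[OF color_reach_sym[OF g xy], of z] by blast
  qed
  then show "color_component_rep i V c x = color_component_rep i V c y"
    unfolding color_component_rep_def by simp
qed

text \<open>Distinct color-i components are modules with respect to each other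
  (color_component_is_module), so the colors between them can be read off the representatives.\<close>
lemma color_component_rep_color:
  assumes g: "gallai_coloring V c" and xy: "x \<in> V" "y \<in> V"
    and ne: "color_component_rep i V c x \<noteq> color_component_rep i V c y"
  shows "c x y = c (color_component_rep i V c x) (color_component_rep i V c y)"
proof -
  let ?f = "color_component_rep i V c" and ?R = "color_reach i V c"
  have "\<not> ?R x y" using ne color_component_rep_eq_iff[OF g] by simp
  then have fx_y: "c (?f x) y = c x y"
    using color_component_is_module[OF g color_reach_component_rep xy(2)] by simp
  have "\<not> ?R y (?f x)"
  proof
    assume "?R y (?f x)"
    then have "?R y x" using color_reach_sym[OF g color_reach_component_rep] by (rule rtranclp_trans)
    then show False using ne color_component_rep_eq_iff[OF g, of i y x] by simp
  qed
  then have fy_fx: "c (?f y) (?f x) = c y (?f x)"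
    using color_component_is_module[OF g color_reach_component_rep color_component_rep_in[OF xy(1)]]
    by simp
  have "y \<noteq> ?f x" using \<open>\<not> ?R y (?f x)\<close> by auto
  have "c x y = c y (?f x)"
    using fx_y gallai_coloring_sym[OF g color_component_rep_in[OF xy(1)] xy(2)] \<open>y \<noteq> ?f x\<close> by auto
  also have "\<dots> = c (?f x) (?f y)"
    using fy_fx
      gallai_coloring_sym[OF g color_component_rep_in[OF xy(2)] color_component_rep_in[OF xy(1)]]
      ne by auto
  finally show ?thesis .
qed

lemma card_color_component_reps:
  assumes g: "gallai_coloring V c" and fin: "finite V"
    and edge: "color_edge i V c x0 y0" and disconn: "\<not> color_connected i V c"
  shows "2 \<le> card (color_component_rep i V c ` V)" "card (color_component_rep i V c ` V) < card V"
proof -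
  let ?f = "color_component_rep i V c"
  obtain x y where xy: "x \<in> V" "y \<in> V" "\<not> color_reach i V c x y"
    using edge disconn by (auto simp: color_connected_def)
  then show "2 \<le> card (?f ` V)"
    using card_mono[of "?f ` V" "{?f x, ?f y}"] fin color_component_rep_eq_iff[OF g, of i x y] by auto
  have "\<not> inj_on ?f V"
    using edge color_component_rep_eq_iff[OF g, of i x0 y0] by (auto simp: inj_on_def color_edge_def)
  then show "card (?f ` V) < card V"
    using card_image_le[OF fin, of ?f] inj_on_iff_eq_card[OF fin, of ?f] by linarith
qed

text \<open>If at least three colors occur, one of them is disconnected (no_three_connected_colors);
  contracting its components to representatives gives a smaller Gallai coloring whose
  partition pulls back to V.\<close>
theorem gallai_partition_exists:
  assumes "finite V" "2 \<le> card V" "gallai_coloring V c"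
  shows "\<exists>P r b. gallai_partition V c P r b"
  using assms
proof (induction "card V" arbitrary: V rule: less_induct)
  case less
  note fin = less.prems(1) and g = less.prems(3)
  show ?case
  proof (cases "\<exists>r b. \<forall>x\<in>V. \<forall>y\<in>V. x \<noteq> y \<longrightarrow> c x y \<in> {r, b}")
    case True
    then show ?thesis using gallai_partition_singletons less.prems(2) by blast
  next
    case False
    obtain i x y where "color_edge i V c x y" "\<not> color_connected i V c"
      using disconnected_color_exists[OF fin g False] .
    note reps = card_color_component_reps[OF g fin this]
    let ?f = "color_component_rep i V c"
    have "?f ` V \<subseteq> V" using color_component_rep_in by (rule image_subsetI)
    then have "\<exists>Q r b. gallai_partition (?f ` V) c Q r b"
      by (rule less.hyps[OF reps(2) finite_imageI[OF fin] reps(1) gallai_coloring_subset[OF g]])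
    then obtain Q r b where "gallai_partition (?f ` V) c Q r b" by blast
    then have "gallai_partition V c ((\<lambda>q. V \<inter> ?f -` q) ` Q) r b"
      by (rule gallai_partition_preimage[where f = ?f and c = c and V = V,
            OF _ color_component_rep_color[OF g]])
    then show ?thesis by blast
  qed
qed

lemma gallai_partition_proper:
  assumes P: "gallai_partition V c P r b" and p: "p \<in> P"
  shows "p \<subset> V" "is_module V c p"
proof -
  have part: "partition_on V P" and "2 \<le> card P" using P by (simp_all add: gallai_partition_def)
  then obtain q where q: "q \<in> P" "q \<noteq> p" by (metis two_le_cardE)
  then obtain z where "z \<in> q" using partition_onD3[OF part] by fastforce
  then have "z \<in> V - p"
    using q p partition_onD1[OF part] partition_onD2[OF part] by (auto simp: disjoint_def)
  then show "p \<subset> V" using p partition_onD1[OF part] by blast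
  show "is_module V c p" using P p by (simp add: gallai_partition_def)
qed

section \<open>Monochromatic double stars\<close>

definition color_nbhd :: "'a set \<Rightarrow> ('a \<Rightarrow> 'a \<Rightarrow> nat) \<Rightarrow> 'a \<Rightarrow> nat \<Rightarrow> 'a set" where
  "color_nbhd V c x i = {y \<in> V. y \<noteq> x \<and> c x y = i}"

definition mono_double_star_in :: "nat \<Rightarrow> nat \<Rightarrow> 'a set \<Rightarrow> ('a \<Rightarrow> 'a \<Rightarrow> nat) \<Rightarrow> bool" where
  "mono_double_star_in n m V c \<longleftrightarrow>
     (\<exists>u v A B i. u \<in> V \<and> v \<in> V \<and> u \<noteq> v \<and> A \<subseteq> V \<and> B \<subseteq> V \<and>
        card A = n \<and> card B = m \<and> A \<inter> B = {} \<and> u \<notin> A \<union> B \<and> v \<notin> A \<union> B \<and>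
        c u v = i \<and> (\<forall>a\<in>A. c u a = i) \<and> (\<forall>b\<in>B. c v b = i))"

lemma has_mono_double_star_iff:
  "has_mono_double_star n m N c \<longleftrightarrow> mono_double_star_in n m {0..<N} c"
  unfolding has_mono_double_star_def mono_double_star_in_def by auto

lemma mono_double_star_inI:
  assumes "u \<in> V" "v \<in> V" "u \<noteq> v" "c u v = i"
    and "A \<subseteq> V" "B \<subseteq> V" "A \<inter> B = {}" "u \<notin> A \<union> B" "v \<notin> A \<union> B"
    and "\<forall>a\<in>A. c u a = i" "\<forall>b\<in>B. c v b = i" "n \<le> card A" "m \<le> card B"
  shows "mono_double_star_in n m V c"
proof -
  obtain A' where A': "A' \<subseteq> A" "card A' = n" using obtain_subset_with_card_n assms(12) by metis
  obtain B' where B': "B' \<subseteq> B" "card B' = m" using obtain_subset_with_card_n assms(13) by metis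
  show ?thesis unfolding mono_double_star_in_def
    by (rule exI[of _ u], rule exI[of _ v], rule exI[of _ A'], rule exI[of _ B'], rule exI[of _ i])
      (use assms A' B' in blast)
qed

lemma mono_double_star_in_mono:
  assumes "mono_double_star_in n m W c" "W \<subseteq> V"
  shows "mono_double_star_in n m V c"
proof -
  obtain u v A B i where "u \<in> W" "v \<in> W" "u \<noteq> v" "A \<subseteq> W" "B \<subseteq> W"
    "card A = n" "card B = m" "A \<inter> B = {}" "u \<notin> A \<union> B" "v \<notin> A \<union> B"
    "c u v = i" "\<forall>a\<in>A. c u a = i" "\<forall>b\<in>B. c v b = i"
    using assms(1) unfolding mono_double_star_in_def by blast
  then show ?thesis using assms(2) by (intro mono_double_star_inI[of u V v c i A B]) auto
qed

lemma mono_double_star_in_of_degrees: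
  assumes fin: "finite V" and uv: "u \<in> V" "v \<in> V" "u \<noteq> v" "c u v = i"
    and deg_u: "n + m + 1 \<le> card (color_nbhd V c u i)"
    and deg_v: "m + 1 \<le> card (color_nbhd V c v i)"
  shows "mono_double_star_in n m V c"
proof -
  have fin_nbhd: "finite (color_nbhd V c x i)" for x using fin by (simp add: color_nbhd_def)
  have "m \<le> card (color_nbhd V c v i - {u})"
    using deg_v diff_card_le_card_Diff[OF finite.emptyI[THEN finite.insertI, of u],
        of "color_nbhd V c v i"]
    by simp
  then obtain B where B: "B \<subseteq> color_nbhd V c v i - {u}" "card B = m"
    using obtain_subset_with_card_n by metis
  have "card (color_nbhd V c u i) - 1 - m \<le> card (color_nbhd V c u i - {v} - B)"
    using diff_card_le_card_Diff[of "{v} \<union> B" "color_nbhd V c u i"] B card_Un_le[of "{v}" B]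
      finite_subset[OF B(1)] fin_nbhd by (simp add: set_diff_eq)
  then have "n \<le> card (color_nbhd V c u i - {v} - B)" using deg_u by linarith
  with uv B show ?thesis
    by (intro mono_double_star_inI[of u V v c i "color_nbhd V c u i - {v} - B" B])
      (auto simp: color_nbhd_def)
qed

section \<open>Colorings without a monochromatic double star\<close>

lemma module_color_class_card_le:
  assumes g: "gallai_coloring V c" and fin: "finite V"
    and W: "is_module V c W" "w \<in> W" "n + 1 \<le> card W"
    and no_star: "\<not> mono_double_star_in n m V c"
  shows "card {z \<in> V - W. c z w = i} \<le> m"
proof (rule ccontr)
  define T where "T = {z \<in> V - W. c z w = i}"
  assume "\<not> card T \<le> m"
  then obtain y where y: "y \<in> T" by fastforce
  have WV: "W \<subseteq> V" using W(1) by (simp add: is_module_def)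
  have "finite W" "finite T" using finite_subset[OF WV fin] fin by (simp_all add: T_def)
  have "mono_double_star_in n m V c"
  proof (rule mono_double_star_inI[of y V w c i "W - {w}" "T - {y}"])
    show "\<forall>a\<in>W - {w}. c y a = i" using W(1,2) y unfolding is_module_def T_def by auto
    show "\<forall>b\<in>T - {y}. c w b = i"
      using gallai_coloring_sym[OF g] W(2) WV unfolding T_def by fastforce
    show "n \<le> card (W - {w})" "m \<le> card (T - {y})"
      using W(2,3) y \<open>\<not> card T \<le> m\<close> \<open>finite W\<close> \<open>finite T\<close> by auto
  qed (use y W(2) WV in \<open>auto simp: T_def\<close>)
  with no_star show False by contradiction
qed

lemma module_complement_card_le:
  assumes g: "gallai_coloring V c" and fin: "finite V"
    and W: "is_module V c W" "w \<in> W" "n + 1 \<le> card W"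
    and no_star: "\<not> mono_double_star_in n m V c"
  shows "card (V - W) \<le> card ((\<lambda>z. c z w) ` (V - W)) * m"
proof -
  let ?J = "(\<lambda>z. c z w) ` (V - W)"
  have "card (V - W) = card (\<Union>i\<in>?J. {z \<in> V - W. c z w = i})"
    by (rule arg_cong[where f = card]) auto
  also have "\<dots> \<le> (\<Sum>i\<in>?J. card {z \<in> V - W. c z w = i})"
    by (rule card_UN_le) (use fin in simp)
  also have "\<dots> \<le> card ?J * m"
    using sum_bounded_above[of ?J _ m] module_color_class_card_le[OF g fin W no_star] by simp
  finally show ?thesis .
qed

lemma module_inner_degree_lt:
  assumes fin: "finite V" and W: "is_module V c W" "n + m + 1 \<le> card W"
    and z: "z \<in> V - W" and w: "w \<in> W" and x: "x \<in> W"
    and no_star: "\<not> mono_double_star_in n m V c"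
  shows "card (color_nbhd W c x (c z w)) < m"
proof (rule ccontr)
  let ?i = "c z w"
  assume "\<not> card (color_nbhd W c x ?i) < m"
  then obtain B where B: "B \<subseteq> color_nbhd W c x ?i" "card B = m"
    using obtain_subset_with_card_n by (metis not_less)
  have WV: "W \<subseteq> V" using W(1) by (simp add: is_module_def)
  have "finite W" using finite_subset[OF WV fin] .
  have "card W - 1 - m \<le> card (W - {x} - B)"
    using diff_card_le_card_Diff[of "{x} \<union> B" W] card_Un_le[of "{x}" B] B(2)
      finite_subset[OF _ \<open>finite W\<close>, of B] B(1)
    by (simp add: set_diff_eq color_nbhd_def subset_iff)
  then have "n \<le> card (W - {x} - B)" using W(2) by linarith
  moreover have "\<forall>a\<in>W. c z a = ?i" using W(1) z w unfolding is_module_def by blast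
  ultimately have "mono_double_star_in n m V c"
    using z x B WV by (intro mono_double_star_inI[of z V x c ?i "W - {x} - B" B])
      (auto simp: color_nbhd_def)
  with no_star show False by contradiction
qed

lemma card_color_nbhd_mono:
  "finite V \<Longrightarrow> W \<subseteq> V \<Longrightarrow> card (color_nbhd W c x i) \<le> card (color_nbhd V c x i)"
  by (rule card_mono) (auto simp: color_nbhd_def)

lemma module_colors_not_sparse:
  assumes fin: "finite V" and W: "is_module V c W" "w \<in> W" "m \<le> card W"
    and R_deg: "\<forall>i\<in>R. \<forall>x\<in>V. card (color_nbhd V c x i) < m"
  shows "R \<inter> (\<lambda>z. c z w) ` (V - W) = {}"
proof -
  have "\<not> card (color_nbhd V c z (c z w)) < m" if z: "z \<in> V - W" for z
  proof -
    have "W \<subseteq> color_nbhd V c z (c z w)" using W(1,2) z unfolding is_module_def color_nbhd_def by blast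
    then have "card W \<le> card (color_nbhd V c z (c z w))"
      by (rule card_mono[rotated]) (simp add: fin color_nbhd_def)
    then show ?thesis using W(3) by linarith
  qed
  then show ?thesis using R_deg by fastforce
qed

lemma module_inherits_sparse_colors:
  assumes fin: "finite V" and W: "is_module V c W" "n + m + 1 \<le> card W" and w: "w \<in> W"
    and no_star: "\<not> mono_double_star_in n m V c"
    and R_deg: "\<forall>i\<in>R. \<forall>x\<in>V. card (color_nbhd V c x i) < m"
  shows "\<forall>i\<in>R \<union> (\<lambda>z. c z w) ` (V - W). \<forall>x\<in>W. card (color_nbhd W c x i) < m"
proof (intro ballI)
  fix i x assume "i \<in> R \<union> (\<lambda>z. c z w) ` (V - W)" and x: "x \<in> W"
  then consider "i \<in> R" | z where "z \<in> V - W" "i = c z w" by auto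
  then show "card (color_nbhd W c x i) < m"
  proof cases
    case 1
    have "W \<subseteq> V" using W(1) by (simp add: is_module_def)
    then show ?thesis using 1 R_deg card_color_nbhd_mono[OF fin, of W c x i] x by fastforce
  next
    case 2
    then show ?thesis using module_inner_degree_lt[OF fin W _ w x no_star] by simp
  qed
qed

locale star_free_gallai_partition =
  fixes n m :: nat and V :: "'a set" and c :: "'a \<Rightarrow> 'a \<Rightarrow> nat" and P :: "'a set set"
    and r b :: nat
  assumes finite_V: "finite V"
    and gallai: "gallai_coloring V c"
    and partition: "gallai_partition V c P r b"
    and no_star: "\<not> mono_double_star_in n m V c"
    and parts_small: "\<And>p. p \<in> P \<Longrightarrow> card p \<le> n"
    and large: "2 * n + 3 * m + 4 \<le> card V"
begin

lemma part_subset: "p \<in> P \<Longrightarrow> p \<subseteq> V"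
  using partition by (auto simp: gallai_partition_def partition_on_def)

lemma finite_part: "p \<in> P \<Longrightarrow> finite p"
  using finite_subset[OF part_subset finite_V] .

lemma part_nonempty: "p \<in> P \<Longrightarrow> p \<noteq> {}"
  using partition by (auto simp: gallai_partition_def partition_on_def)

lemma part_module: "p \<in> P \<Longrightarrow> is_module V c p"
  using partition by (simp add: gallai_partition_def)

lemma parts_disjoint: "p \<in> P \<Longrightarrow> q \<in> P \<Longrightarrow> p \<noteq> q \<Longrightarrow> p \<inter> q = {}"
  using partition by (auto simp: gallai_partition_def partition_on_def disjoint_def)

lemma part_of:
  assumes "x \<in> V"
  obtains p where "p \<in> P" "x \<in> p"
  using partition assms by (auto simp: gallai_partition_def partition_on_def)

lemma cross_color:
  assumes "p \<in> P" "x \<in> p" "z \<in> V - p"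
  shows "c x z \<in> {r, b}"
proof -
  obtain q where "q \<in> P" "z \<in> q" using part_of assms(3) by blast
  moreover have "q \<noteq> p" using calculation assms(3) by blast
  ultimately show ?thesis using partition assms(1,2) unfolding gallai_partition_def by blast
qed

lemma card_outside_part: "p \<in> P \<Longrightarrow> card (V - p) = card V - card p"
  by (simp add: card_Diff_subset finite_part part_subset)

lemma other_color_degree_ge:
  assumes ab: "{a, a'} = {r, b}" and y: "y \<in> V" and deg: "card (color_nbhd V c y a) \<le> m"
  shows "n + m + 1 \<le> card (color_nbhd V c y a')"
proof -
  obtain p where p: "p \<in> P" "y \<in> p" using part_of y by blast
  have "V - p - color_nbhd V c y a \<subseteq> color_nbhd V c y a'"
    using cross_color[OF p] ab p(2) by (auto simp: color_nbhd_def)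
  then have "card (V - p - color_nbhd V c y a) \<le> card (color_nbhd V c y a')"
    by (rule card_mono[rotated]) (simp add: color_nbhd_def finite_V)
  moreover have "card (V - p) - card (color_nbhd V c y a) \<le> card (V - p - color_nbhd V c y a)"
    by (rule diff_card_le_card_Diff) (simp add: color_nbhd_def finite_V)
  ultimately show ?thesis
    using card_outside_part[OF p(1)] parts_small[OF p(1)] deg large by linarith
qed

text \<open>Otherwise every a-neighbour y of x has a-degree at most m (else x and y are the centres
  of a double star), hence large degree in the other cross color; this forces a-edges between
  a-neighbours of x in different parts, so y has more than m a-neighbours after all.\<close>
lemma color_degree_le:
  assumes ab: "{a, a'} = {r, b}" and x: "x \<in> V"
  shows "card (color_nbhd V c x a) \<le> n + m"
proof (rule ccontr)
  define Y where "Y = color_nbhd V c x a"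
  assume "\<not> card (color_nbhd V c x a) \<le> n + m"
  then have big: "n + m + 1 \<le> card Y" by (simp add: Y_def)
  have Y: "y \<in> V" "x \<noteq> y" "c x y = a" if "y \<in> Y" for y
    using that by (auto simp: Y_def color_nbhd_def)
  have low: "card (color_nbhd V c y a) \<le> m" if "y \<in> Y" for y
  proof (rule ccontr)
    assume "\<not> ?thesis"
    then have "mono_double_star_in n m V c"
      using mono_double_star_in_of_degrees[where c = c, OF finite_V x Y[OF that]] big
      by (simp add: Y_def)
    with no_star show False by contradiction
  qed
  have high: "n + m + 1 \<le> card (color_nbhd V c y a')" if "y \<in> Y" for y
    using other_color_degree_ge[OF ab Y(1)[OF that] low[OF that]] .
  have across: "c y y' = a" if "y \<in> Y" "y' \<in> Y" "p \<in> P" "y \<in> p" "y' \<notin> p" for y y' p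
  proof (rule ccontr)
    assume "c y y' \<noteq> a"
    then have "c y y' = a'" using cross_color[OF that(3,4)] ab Y(1)[OF that(2)] that(5) by auto
    moreover have "y \<noteq> y'" using that(4,5) by auto
    ultimately have "mono_double_star_in n m V c"
      using mono_double_star_in_of_degrees[where c = c, OF finite_V Y(1)[OF that(1)] Y(1)[OF that(2)]]
        high[OF that(1)] high[OF that(2)] by simp
    with no_star show False by contradiction
  qed
  obtain y where y: "y \<in> Y" using big by fastforce
  obtain p where p: "p \<in> P" "y \<in> p" using part_of Y(1)[OF y] by blast
  have "insert x (Y - p) \<subseteq> color_nbhd V c y a"
    using Y y p x across gallai_coloring_sym[OF gallai x] by (auto simp: color_nbhd_def)
  then have "card (insert x (Y - p)) \<le> card (color_nbhd V c y a)"
    by (rule card_mono[rotated]) (simp add: color_nbhd_def finite_V)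
  moreover have "x \<notin> Y" by (simp add: Y_def color_nbhd_def)
  then have "card (insert x (Y - p)) = card (Y - p) + 1"
    using finite_V by (simp add: Y_def color_nbhd_def)
  moreover have "card Y - card p \<le> card (Y - p)"
    by (rule diff_card_le_card_Diff[OF finite_part[OF p(1)]])
  ultimately show False using low[OF y] big parts_small[OF p(1)] by linarith
qed

lemma part_card_gt:
  assumes p: "p \<in> P"
  shows "m < card p"
proof -
  obtain x where x: "x \<in> p" using part_nonempty[OF p] by blast
  have xV: "x \<in> V" using x part_subset[OF p] by blast
  have "V - p \<subseteq> color_nbhd V c x r \<union> color_nbhd V c x b"
    using cross_color[OF p x] x by (auto simp: color_nbhd_def)
  then have "card (V - p) \<le> card (color_nbhd V c x r \<union> color_nbhd V c x b)"
    by (rule card_mono[rotated]) (simp add: color_nbhd_def finite_V)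
  also have "\<dots> \<le> card (color_nbhd V c x r) + card (color_nbhd V c x b)" by (rule card_Un_le)
  also have "\<dots> \<le> 2 * (n + m)"
    using color_degree_le[OF refl xV] color_degree_le[OF insert_commute xV] by simp
  finally have "card (V - p) \<le> 2 * (n + m)" .
  moreover have "card p \<le> card V" using card_mono[OF finite_V part_subset[OF p]] .
  ultimately show ?thesis using card_outside_part[OF p] large by arith
qed

lemma outside_color_card_le:
  assumes p: "p \<in> P" and x: "x \<in> p"
  shows "card {z \<in> V - p. c x z = a} \<le> n"
proof (rule ccontr)
  define X where "X = {z \<in> V - p. c x z = a}"
  assume "\<not> card {z \<in> V - p. c x z = a} \<le> n"
  then have big: "n + 1 \<le> card X" by (simp add: X_def)
  then obtain y where y: "y \<in> X" by fastforce
  have xV: "x \<in> V" and yV: "y \<in> V - p" "c x y = a" using x y part_subset[OF p] by (auto simp: X_def)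
  have "c y z = a" if "z \<in> p - {x}" for z
  proof -
    have "c y z = c y x" using part_module[OF p] yV(1) that x unfolding is_module_def by blast
    also have "\<dots> = c x y" using gallai_coloring_sym[OF gallai xV, of y] yV x by fastforce
    finally show ?thesis using yV(2) by simp
  qed
  moreover have "m \<le> card (p - {x})" using part_card_gt[OF p] x finite_part[OF p] by simp
  moreover have "n \<le> card (X - {y})" using big y finite_V by (simp add: X_def)
  ultimately have "mono_double_star_in n m V c"
    using x xV yV part_subset[OF p]
    by (intro mono_double_star_inI[of x V y c a "X - {y}" "p - {x}"]) (auto simp: X_def)
  with no_star show False by contradiction
qed

lemma card_le_part_plus:
  assumes p: "p \<in> P"
  shows "card V \<le> card p + 2 * n"
proof -
  obtain x where x: "x \<in> p" using part_nonempty[OF p] by blast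
  have "V - p \<subseteq> {z \<in> V - p. c x z = r} \<union> {z \<in> V - p. c x z = b}"
    using cross_color[OF p x] by auto
  then have "card (V - p) \<le> card ({z \<in> V - p. c x z = r} \<union> {z \<in> V - p. c x z = b})"
    by (rule card_mono[rotated]) (simp add: finite_V)
  also have "\<dots> \<le> card {z \<in> V - p. c x z = r} + card {z \<in> V - p. c x z = b}" by (rule card_Un_le)
  also have "\<dots> \<le> 2 * n"
    using add_mono[OF outside_color_card_le[OF p x, of r] outside_color_card_le[OF p x, of b]] by simp
  finally show ?thesis using card_outside_part[OF p] by linarith
qed

text \<open>Two parts seen from x in the same color a would give x more than n outside a-neighbours,
  because every part has more than card V - 2 n \<ge> 3 m + 4 vertices.\<close>
lemma two_parts_seen_in_distinct_colors:
  assumes nm: "n \<le> 6 * m + 6"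
    and parts: "p \<in> P" "q \<in> P" "q' \<in> P" "p \<noteq> q" "p \<noteq> q'" "q \<noteq> q'"
    and xy: "x \<in> p" "y \<in> q" "y' \<in> q'"
  shows "c x y \<noteq> c x y'"
proof
  assume same: "c x y = c x y'"
  have x: "x \<in> V - q" "x \<in> V - q'"
    using xy(1) parts parts_disjoint part_subset by blast+
  have "q \<union> q' \<subseteq> {z \<in> V - p. c x z = c x y}"
  proof
    fix z assume z: "z \<in> q \<union> q'"
    then have "z \<in> V - p" using parts parts_disjoint part_subset by blast
    moreover have "c x z = c x y"
    proof (cases "z \<in> q")
      case True
      then show ?thesis using part_module[OF parts(2)] x(1) xy(2) unfolding is_module_def by blast
    next
      case False
      then have "z \<in> q'" using z by blast
      then show ?thesis using part_module[OF parts(3)] x(2) xy(3) same unfolding is_module_def by metis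
    qed
    ultimately show "z \<in> {z \<in> V - p. c x z = c x y}" by simp
  qed
  then have "card (q \<union> q') \<le> card {z \<in> V - p. c x z = c x y}"
    by (rule card_mono[rotated]) (simp add: finite_V)
  also have "\<dots> \<le> n" by (rule outside_color_card_le[OF parts(1) xy(1)])
  finally have "card (q \<union> q') \<le> n" .
  moreover have "card (q \<union> q') = card q + card q'"
    using card_Un_disjoint finite_part parts parts_disjoint by metis
  ultimately show False
    using card_le_part_plus[OF parts(2)] card_le_part_plus[OF parts(3)] large nm by linarith
qed

lemma inconsistent:
  assumes nm: "n \<le> 6 * m + 6"
  shows False
proof -
  have "2 \<le> card P" using partition by (simp add: gallai_partition_def)
  then obtain p1 p2 where p12: "p1 \<in> P" "p2 \<in> P" "p1 \<noteq> p2" by (rule two_le_cardE)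
  show False
  proof (cases "P \<subseteq> {p1, p2}")
    case True
    then have "V \<subseteq> p1 \<union> p2" using partition by (auto simp: gallai_partition_def partition_on_def)
    then have "card V \<le> card p1 + card p2"
      using card_mono[of "p1 \<union> p2" V] card_Un_le[of p1 p2] finite_part p12 by force
    then show False using parts_small[OF p12(1)] parts_small[OF p12(2)] large by linarith
  next
    case False
    then obtain p3 where p3: "p3 \<in> P" "p3 \<noteq> p1" "p3 \<noteq> p2" by blast
    obtain x1 x2 x3 where x: "x1 \<in> p1" "x2 \<in> p2" "x3 \<in> p3"
      using part_nonempty p12 p3 by (metis all_not_in_conv)
    have V: "x1 \<in> V" "x2 \<in> V" "x3 \<in> V" using x p12 p3 part_subset by blast+
    have "x1 \<noteq> x2" "x1 \<noteq> x3" "x2 \<noteq> x3" using x p12 p3 parts_disjoint by blast+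
    then have sym: "c x2 x1 = c x1 x2" "c x3 x1 = c x1 x3" "c x3 x2 = c x2 x3"
      using gallai_coloring_sym[OF gallai] V by metis+
    have "c x1 x2 \<in> {r, b}" "c x1 x3 \<in> {r, b}" "c x2 x3 \<in> {r, b}"
      using cross_color x p12 p3 V parts_disjoint by blast+
    then consider "c x1 x2 = c x1 x3" | "c x2 x1 = c x2 x3" | "c x3 x1 = c x3 x2"
      using sym by auto
    then show False
      using two_parts_seen_in_distinct_colors[OF nm] p12 p3 x by cases metis+
  qed
qed

end

lemma card_le_if_modules_small:
  assumes fin: "finite V" and g: "gallai_coloring V c" and no_star: "\<not> mono_double_star_in n m V c"
    and small: "\<And>W. W \<subset> V \<Longrightarrow> is_module V c W \<Longrightarrow> card W \<le> n" and nm: "n \<le> 6 * m + 6"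
  shows "card V \<le> 2 * n + 3 * m + 3"
proof (rule ccontr)
  assume "\<not> ?thesis"
  then have large: "2 * n + 3 * m + 4 \<le> card V" by linarith
  then obtain P r b where P: "gallai_partition V c P r b"
    using gallai_partition_exists[OF fin _ g] by fastforce
  have "card p \<le> n" if "p \<in> P" for p using small gallai_partition_proper[OF P that] by blast
  then show False
    using star_free_gallai_partition.inconsistent[OF star_free_gallai_partition.intro,
        OF fin g P no_star _ large nm]
    by blast
qed

theorem star_free_card_le:
  assumes "finite V" "gallai_coloring V c" "\<forall>x\<in>V. \<forall>y\<in>V. x \<noteq> y \<longrightarrow> c x y < k"
    and "\<not> mono_double_star_in n m V c" and "R \<subseteq> {..<k}"
    and "\<forall>i\<in>R. \<forall>x\<in>V. card (color_nbhd V c x i) < m"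
    and "m \<le> n" "n \<le> 6 * m + 6"
  shows "card V \<le> (k - card R) * m + 2 * n + 3 * m + 3"
  using assms
proof (induction "card V" arbitrary: V R rule: less_induct)
  case less
  note fin = less.prems(1) and g = less.prems(2) and colors = less.prems(3)
    and no_star = less.prems(4) and R = less.prems(5) and R_deg = less.prems(6)
  show ?case
  proof (cases "\<exists>W. W \<subset> V \<and> is_module V c W \<and> n + 1 \<le> card W")
    case False
    then have "card V \<le> 2 * n + 3 * m + 3"
      by (intro card_le_if_modules_small[OF fin g no_star _ less.prems(8)]) (use False in force)
    then show ?thesis by linarith
  next
    case True
    then obtain W where W: "W \<subset> V" "is_module V c W" "n + 1 \<le> card W" by blast
    then have "W \<noteq> {}" by auto
    then obtain w where w: "w \<in> W" by blast
    define J where "J = (\<lambda>z. c z w) ` (V - W)"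
    have WV: "W \<subseteq> V" using W(1) by blast
    have card_V: "card V = card W + card (V - W)"
      using card_Diff_subset[OF finite_subset[OF WV fin] WV] card_mono[OF fin WV] by simp
    have outside: "card (V - W) \<le> card J * m"
      using module_complement_card_le[OF g fin W(2) w W(3) no_star] by (simp add: J_def)
    have "R \<inter> J = {}"
      using module_colors_not_sparse[OF fin W(2) w _ R_deg] W(3) less.prems(7) by (simp add: J_def)
    moreover have "finite R" "finite J" using finite_subset[OF R] fin by (simp_all add: J_def)
    ultimately have RJ: "card (R \<union> J) = card R + card J" by (simp add: card_Un_disjoint)
    have "J \<subseteq> {..<k}" unfolding J_def
    proof (rule image_subsetI)
      fix z assume "z \<in> V - W"
      then have "z \<in> V" "w \<in> V" "z \<noteq> w" using W(1) w by auto
      then show "c z w \<in> {..<k}" using colors by simp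
    qed
    then have RJ_k: "R \<union> J \<subseteq> {..<k}" "card (R \<union> J) \<le> k"
      using card_mono[of "{..<k}" "R \<union> J"] R by auto
    show ?thesis
    proof (cases "n + m + 1 \<le> card W")
      case True
      have deg_W: "\<forall>i\<in>R \<union> J. \<forall>x\<in>W. card (color_nbhd W c x i) < m"
        using module_inherits_sparse_colors[OF fin W(2) True w no_star R_deg] by (simp add: J_def)
      have "card W \<le> (k - card (R \<union> J)) * m + 2 * n + 3 * m + 3"
        using less.hyps[OF psubset_card_mono[OF fin W(1)] finite_subset[OF WV fin]
          gallai_coloring_subset[OF g WV] _ _ RJ_k(1) deg_W less.prems(7,8)]
          colors no_star mono_double_star_in_mono WV by blast
      moreover have "k - card (R \<union> J) + card J = k - card R" using RJ RJ_k(2) by arith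
      then have "(k - card (R \<union> J)) * m + card J * m = (k - card R) * m" by (metis add_mult_distrib)
      ultimately show ?thesis using card_V outside by linarith
    next
      case False
      have "card J * m \<le> (k - card R) * m" by (rule mult_le_mono1) (use RJ RJ_k(2) in arith)
      then show ?thesis using card_V outside False by linarith
    qed
  qed
qed

lemma gallai_coloring_if_no_rainbow_K3:
  assumes "kcoloring k N c" "\<not> has_rainbow_K3 N c"
  shows "gallai_coloring {0..<N} c"
  using assms unfolding kcoloring_def has_rainbow_K3_def gallai_coloring_def by (auto; meson)

lemma gr_K3_double_star_le:
  assumes "m \<le> n" "n \<le> 6 * m + 6"
  shows "gr_K3_double_star k n m \<le> 2 * n + (k + 3) * m + 4"
proof -
  let ?N = "2 * n + (k + 3) * m + 4"
  have "has_rainbow_K3 ?N c \<or> has_mono_double_star n m ?N c" if c: "kcoloring k ?N c" for c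
  proof (rule ccontr)
    assume "\<not> ?thesis"
    then have "gallai_coloring {0..<?N} c" "\<not> mono_double_star_in n m {0..<?N} c"
      using gallai_coloring_if_no_rainbow_K3[OF c] by (simp_all add: has_mono_double_star_iff)
    moreover have "\<forall>x\<in>{0..<?N}. \<forall>y\<in>{0..<?N}. x \<noteq> y \<longrightarrow> c x y < k"
      using c by (simp add: kcoloring_def)
    ultimately have "card {0..<?N} \<le> (k - card {}) * m + 2 * n + 3 * m + 3"
      using star_free_card_le[of "{0..<?N}" c k n m "{}"] assms by simp
    then show False by (simp add: algebra_simps)
  qed
  then show ?thesis unfolding gr_K3_double_star_def by (intro Least_le) blast
qed

theorem proposition4:
  fixes n m k :: nat
  assumes "m \<ge> 1" and "n \<ge> m" and "k \<ge> 3" and "n \<le> 6 * m + 6"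
  shows "gr_K3_double_star k n m \<le>
           (if even n then 2 * n + m * (k + 3) + 8 else 2 * n + m * (k + 3) + 9)"
  using gr_K3_double_star_le[OF assms(2,4), of k] by (simp add: mult.commute)

end
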